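(* For every integer $i\ge 1$, $\lim_{k\to\infty}\overline{\alpha}(\{1,2i+1,2k\})=\frac12$.
   Context: For a finite set $S$ of positive integers, the distance graph $G(S)$ has vertex set $\mathbb{Z}$, with $i,j$ adjacent iff $|i-j|\in S$. The density of $A\subseteq\mathbb{Z}$ is $\delta(A)=\limsup_{N\to\infty}\frac{|A\cap[-N,N]|}{2N+1}$, and the independence ratio $\overline{\alpha}(S)$ is the supremum of $\delta(A)$ over independent sets $A$ of $G(S)$. *)

theory Defs
  imports "HOL-Analysis.Analysis"
begin

definition density :: "int set \<Rightarrow> ereal" where
  "density A = limsup (\<lambda>N::nat. ereal (real (card (A \<inter> {- int N .. int N})) / real (2 * N + 1)))"

definition indep_dist :: "int set \<Rightarrow> int set \<Rightarrow> bool" where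
  "indep_dist S A \<longleftrightarrow> (\<forall>i\<in>A. \<forall>j\<in>A. i \<noteq> j \<longrightarrow> \<bar>i - j\<bar> \<notin> S)"

definition indep_ratio :: "int set \<Rightarrow> ereal" where
  "indep_ratio S = (SUP A \<in> {A. indep_dist S A}. density A)"

end

theory Submission
  imports Defs "HOL-Real_Asymp.Real_Asymp"
begin

text \<open>
  Since 1 is a forbidden distance, an independent set contains at most one of any two consecutive
  integers, so its density is at most 1/2. Conversely, for k \<ge> i + 1 the set of integers
  whose residue modulo 4k is an even number below 2(k-i-1) or an odd number in
  [2k+1, 2k+2(k-i-1)) avoids the distances 1, 2i+1 and 2k: odd distances change the parity, and
  the two blocks are too short to be joined by an odd step, while the even step 2k maps each block
  onto numbers of the wrong parity. This periodic set has density (k-i-1)/(2k), which tends to 1/2.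
\<close>

lemma density_le_if_tendsto:
  assumes "(f \<longlongrightarrow> c) sequentially"
    and "\<And>N. real (card (A \<inter> {- int N .. int N})) / real (2 * N + 1) \<le> f N"
  shows "density A \<le> ereal c"
proof -
  have "density A \<le> limsup (\<lambda>N. ereal (f N))"
    unfolding density_def by (intro Limsup_mono always_eventually allI) (simp only: ereal_less_eq(3) assms(2))
  also have "\<dots> = ereal c"
    by (intro lim_imp_Limsup trivial_limit_sequentially tendsto_ereal assms(1))
  finally show ?thesis .
qed

lemma density_ge_if_tendsto:
  assumes "(f \<longlongrightarrow> c) sequentially"
    and "\<And>N. f N \<le> real (card (A \<inter> {- int N .. int N})) / real (2 * N + 1)"
  shows "ereal c \<le> density A"
proof -
  have "ereal c = limsup (\<lambda>N. ereal (f N))"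
    by (intro lim_imp_Limsup [symmetric] trivial_limit_sequentially tendsto_ereal assms(1))
  also have "\<dots> \<le> density A"
    unfolding density_def by (intro Limsup_mono always_eventually allI) (simp only: ereal_less_eq(3) assms(2))
  finally show ?thesis .
qed

lemma card_indep_dist_interval_le:
  assumes "indep_dist S A" "1 \<in> S"
  shows "card (A \<inter> {- int N .. int N}) \<le> N + 1"
proof -
  let ?I = "A \<inter> {- int N .. int N}"
  let ?pair = "\<lambda>x::int. nat ((x + int N) div 2)"
  have "inj_on ?pair ?I"
  proof (rule inj_onI)
    fix x y assume x: "x \<in> ?I" and y: "y \<in> ?I" and "?pair x = ?pair y"
    then have "\<bar>x - y\<bar> \<le> 1" by (simp add: nat_eq_iff2)
    moreover have "x \<noteq> y \<Longrightarrow> \<bar>x - y\<bar> \<notin> S"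
      using assms(1) x y unfolding indep_dist_def by blast
    ultimately show "x = y" using assms(2) by (metis antisym_conv2 eq_iff_diff_eq_0 zabs_less_one_iff)
  qed
  then have "card ?I = card (?pair ` ?I)" by (rule card_image [symmetric])
  also have "\<dots> \<le> card {0..N}" by (intro card_mono) auto
  finally show ?thesis by simp
qed

lemma density_indep_dist_le_half:
  assumes "indep_dist S A" "1 \<in> S"
  shows "density A \<le> ereal (1 / 2)"
proof (rule density_le_if_tendsto)
  show "(\<lambda>N::nat. (real N + 1) / (2 * real N + 1)) \<longlonglongrightarrow> 1 / 2" by real_asymp
  fix N
  have "real (card (A \<inter> {- int N .. int N})) \<le> real N + 1"
    using card_indep_dist_interval_le [OF assms, of N] by linarith
  then show "real (card (A \<inter> {- int N .. int N})) / real (2 * N + 1) \<le> (real N + 1) / (2 * real N + 1)"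
    by (simp add: divide_right_mono add.commute)
qed

lemma indep_ratio_le_half:
  assumes "1 \<in> S"
  shows "indep_ratio S \<le> ereal (1 / 2)"
  unfolding indep_ratio_def using assms by (auto intro!: SUP_least density_indep_dist_le_half)

lemma card_periodic_interval_ge:
  fixes P :: int
  assumes P: "P > 0" and R: "R \<subseteq> {0..<P}"
  shows "nat (2 * (int N div P)) * card R \<le> card ({x. x mod P \<in> R} \<inter> {- int N .. int N})"
proof -
  define M where "M = int N div P"
  have "M * P \<le> int N" using P by (simp add: M_def) (metis div_mult_mod_eq le_add_same_cancel1 pos_mod_sign)
  let ?f = "\<lambda>(q, r). q * P + r"
  have "inj_on ?f ({-M..<M} \<times> R)"
  proof (rule inj_onI, clarify)
    fix q r q' r' assume "r \<in> R" "r' \<in> R" "q * P + r = q' * P + r'"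
    then have "(q * P + r) div P = (q' * P + r') div P" "(q * P + r) mod P = (q' * P + r') mod P"
      by auto
    moreover have "0 \<le> r" "r < P" "0 \<le> r'" "r' < P" using \<open>r \<in> R\<close> \<open>r' \<in> R\<close> R by auto
    ultimately show "q = q' \<and> r = r'" using P by simp
  qed
  moreover have "?f ` ({-M..<M} \<times> R) \<subseteq> {x. x mod P \<in> R} \<inter> {- int N .. int N}"
  proof clarify
    fix q r assume q: "q \<in> {-M..<M}" and r: "r \<in> R"
    have "-M * P \<le> q * P" "q * P \<le> (M - 1) * P"
      using q P by (intro mult_right_mono; simp)+
    with r R P \<open>M * P \<le> int N\<close> show "q * P + r \<in> {x. x mod P \<in> R} \<inter> {- int N .. int N}"
      by (auto simp: algebra_simps)
  qed
  ultimately have "card ({-M..<M} \<times> R) \<le> card ({x. x mod P \<in> R} \<inter> {- int N .. int N})"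
    by (metis card_image card_mono finite_Int finite_atLeastAtMost_int)
  then show ?thesis by (simp add: M_def card_cartesian_product)
qed

lemma density_periodic_ge:
  fixes P :: int
  assumes P: "P > 0" and R: "R \<subseteq> {0..<P}"
  shows "ereal (real (card R) / real_of_int P) \<le> density {x. x mod P \<in> R}"
proof (rule density_ge_if_tendsto)
  let ?count = "\<lambda>N. card ({x. x mod P \<in> R} \<inter> {- int N .. int N})"
  define c where "c = 2 * real (card R) / P"
  have "(\<lambda>N::nat. c * ((real N - P) / (2 * real N + 1))) \<longlonglongrightarrow> c * (1 / 2)"
    by (intro tendsto_mult_left) real_asymp
  then show "(\<lambda>N::nat. c * ((real N - P) / (2 * real N + 1))) \<longlonglongrightarrow> real (card R) / P"
    by (simp add: c_def)
  fix N
  define M where "M = int N div P"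
  have "M \<ge> 0" using P by (simp add: M_def pos_imp_zdiv_nonneg_iff)
  have "real (nat (2 * M) * card R) \<le> ?count N"
    unfolding M_def of_nat_le_iff by (rule card_periodic_interval_ge [OF P R])
  then have count: "2 * real_of_int M * card R \<le> ?count N"
    using \<open>M \<ge> 0\<close> by simp
  have "int N < M * P + P"
    using P by (simp add: M_def) (metis div_mult_mod_eq add_strict_left_mono pos_mod_bound)
  then have "real_of_int (int N) < real_of_int (M * P + P)"
    by (simp only: of_int_less_iff)
  then have "real N - P \<le> real_of_int M * P" by simp
  then have "c * (real N - P) \<le> c * (real_of_int M * P)"
    by (rule mult_left_mono) (simp add: c_def P less_imp_le)
  also have "\<dots> = 2 * real_of_int M * card R"
    using P by (simp add: c_def)
  also note count
  finally show "c * ((real N - P) / (2 * real N + 1)) \<le> real (?count N) / real (2 * N + 1)"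
    by (simp add: divide_right_mono add.commute)
qed

definition alternating_residues :: "int \<Rightarrow> int \<Rightarrow> int set" where
  "alternating_residues K m = (\<lambda>j. 2 * j) ` {0..<m} \<union> (\<lambda>j. 2 * K + 2 * j + 1) ` {0..<m}"

lemma card_alternating_residues:
  "m \<ge> 0 \<Longrightarrow> card (alternating_residues K m) = 2 * nat m"
  unfolding alternating_residues_def
  by (subst card_Un_disjoint) (auto simp: card_image inj_on_def, presburger)

lemma alternating_residues_subset:
  "m \<le> K \<Longrightarrow> alternating_residues K m \<subseteq> {0..<4 * K}"
  unfolding alternating_residues_def by auto

lemma mod_eq_self_or_diff:
  fixes a b :: int
  assumes "0 \<le> a" "a < 2 * b"
  shows "a mod b = a \<or> a mod b = a - b"
proof (cases "a < b")
  case True then show ?thesis using assms by simp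
next
  case False
  then have "a mod b = (a - b) mod b" using assms by (intro mod_pos_geq) linarith+
  also have "\<dots> = a - b" using False assms by (intro mod_pos_pos_trivial) linarith+
  finally show ?thesis ..
qed

lemma alternating_residues_shift_notin:
  assumes "0 \<le> i" "m + i + 1 \<le> K" "r \<in> alternating_residues K m" "d \<in> {1, 2 * i + 1, 2 * K}"
  shows "(r + d) mod (4 * K) \<notin> alternating_residues K m"
proof
  assume shifted: "(r + d) mod (4 * K) \<in> alternating_residues K m"
  have "0 \<le> r + d" "r + d < 2 * (4 * K)"
    using assms by (auto simp: alternating_residues_def)
  then consider "(r + d) mod (4 * K) = r + d" | "(r + d) mod (4 * K) = r + d - 4 * K"
    using mod_eq_self_or_diff by blast
  then show False
    using shifted assms by cases (auto simp: alternating_residues_def; presburger)+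
qed

lemma indep_dist_periodic:
  assumes "\<And>r d. r \<in> R \<Longrightarrow> d \<in> S \<Longrightarrow> (r + d) mod P \<notin> R"
  shows "indep_dist S {x. x mod P \<in> R}"
proof -
  have "b - a \<notin> S" if "a mod P \<in> R" "b mod P \<in> R" for a b
    using assms [of "a mod P" "b - a"] that by (auto simp: mod_add_left_eq)
  then show ?thesis unfolding indep_dist_def by (auto simp: abs_if)
qed

lemma indep_ratio_ge:
  fixes i K :: int
  assumes "0 \<le> i" "i + 1 \<le> K"
  shows "ereal ((K - i - 1) / (2 * K)) \<le> indep_ratio {1, 2 * i + 1, 2 * K}"
proof -
  define R where "R = alternating_residues K (K - i - 1)"
  have "indep_dist {1, 2 * i + 1, 2 * K} {x. x mod (4 * K) \<in> R}"
    unfolding R_def using assms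
    by (intro indep_dist_periodic alternating_residues_shift_notin) auto
  then have "density {x. x mod (4 * K) \<in> R} \<le> indep_ratio {1, 2 * i + 1, 2 * K}"
    unfolding indep_ratio_def by (auto intro: SUP_upper)
  moreover have "ereal (real (card R) / real_of_int (4 * K)) \<le> density {x. x mod (4 * K) \<in> R}"
    unfolding R_def using assms by (intro density_periodic_ge alternating_residues_subset) auto
  moreover have "real (card R) / real_of_int (4 * K) = (K - i - 1) / (2 * K)"
    unfolding R_def using assms by (simp add: card_alternating_residues field_simps)
  ultimately show ?thesis by simp
qed

theorem theorem23:
  fixes i :: int
  assumes "i \<ge> 1"
  shows "(\<lambda>k::nat. indep_ratio {1, 2 * i + 1, 2 * int k}) \<longlonglongrightarrow> ereal (1 / 2)"
proof (rule tendsto_sandwich)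
  have "ereal ((real k - i - 1) / (2 * real k)) \<le> indep_ratio {1, 2 * i + 1, 2 * int k}"
    if "k \<ge> nat (i + 1)" for k
    using indep_ratio_ge [of i "int k"] assms that by simp
  then show "\<forall>\<^sub>F k in sequentially.
      ereal ((real k - i - 1) / (2 * real k)) \<le> indep_ratio {1, 2 * i + 1, 2 * int k}"
    unfolding eventually_sequentially by blast
  show "\<forall>\<^sub>F k in sequentially. indep_ratio {1, 2 * i + 1, 2 * int k} \<le> ereal (1 / 2)"
    by (intro always_eventually allI indep_ratio_le_half) simp
  have "(\<lambda>k::nat. (real k - i - 1) / (2 * real k)) \<longlonglongrightarrow> 1 / 2" by real_asymp
  then show "(\<lambda>k. ereal ((real k - i - 1) / (2 * real k))) \<longlonglongrightarrow> ereal (1 / 2)"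
    by (rule tendsto_ereal)
qed (rule tendsto_const)

end
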